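(* Let $K$ be a field and let $I_A\subset K[x_1,\ldots,x_n]$ be a toric ideal of height $r\ge 3$ such that $\mathrm{bar}(I_A)\le 2r-2$. Then $I_A$ is radical splittable.
   Context: $A=\{{\bf a}_1,\ldots,{\bf a}_n\}\subset\mathbb{Z}^m$ is a vector configuration with $\ker_{\mathbb{Z}}(A)\cap\mathbb{N}^n=\{{\bf 0}\}$, where $\ker_{\mathbb{Z}}(A)=\{{\bf u}\in\mathbb{Z}^n\mid\sum u_i{\bf a}_i={\bf 0}\}$; $I_A$ is the kernel of $K[x_1,\ldots,x_n]\to K[t_1^{\pm1},\ldots,t_m^{\pm1}]$, $x_i\mapsto{\bf t}^{{\bf a}_i}$, and its height equals $\dim_{\mathbb{Q}}\ker_{\mathbb{Q}}(A)$. The binomial arithmetical rank $\mathrm{bar}(I_A)$ is the smallest $t$ such that there exist binomials $B_1,\ldots,B_t\in I_A$ with $I_A=\mathrm{rad}(B_1,\ldots,B_t)$. $I_A$ is radical splittable if there exist toric ideals $I_{A_1},I_{A_2}\subset K[x_1,\ldots,x_n]$ with $I_A=\mathrm{rad}(I_{A_1}+I_{A_2})$ and $I_{A_i}\ne I_A$ for $i=1,2$. *)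

theory Defs
  imports Complex_Main "HOL-Library.Poly_Mapping" "HOL-Library.Function_Algebras"
begin

type_synonym ('n, 'k) mpoly = "('n \<Rightarrow>\<^sub>0 nat) \<Rightarrow>\<^sub>0 'k"

text \<open>A vector configuration: a_i = A i, a vector with integer coordinates indexed by 'm.\<close>

definition lin_img :: "('n::finite \<Rightarrow> 'm \<Rightarrow> int) \<Rightarrow> ('n \<Rightarrow>\<^sub>0 nat) \<Rightarrow> ('m \<Rightarrow> int)" where
  "lin_img A \<alpha> = (\<lambda>j. \<Sum>i\<in>UNIV. int (Poly_Mapping.lookup \<alpha> i) * A i j)"

definition pointed_config :: "('n::finite \<Rightarrow> 'm \<Rightarrow> int) \<Rightarrow> bool" where
  "pointed_config A \<longleftrightarrow> (\<forall>u::'n \<Rightarrow> nat. (\<forall>j. (\<Sum>i\<in>UNIV. int (u i) * A i j) = 0) \<longrightarrow> (\<forall>i. u i = 0))"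

text \<open>The toric ideal I_A: the kernel of x_i \<mapsto> t^{a_i}. The image of f is
  \<Sum>_b (\<Sum>_{A\<alpha>=b} f_\<alpha>) t^b, so f is in the kernel iff every such inner sum vanishes.\<close>
definition toric_ideal :: "('n::finite \<Rightarrow> 'm \<Rightarrow> int) \<Rightarrow> ('n, 'k::field) mpoly set" where
  "toric_ideal A = {f. \<forall>b. (\<Sum>\<alpha>\<in>{\<alpha>\<in>Poly_Mapping.keys f. lin_img A \<alpha> = b}. Poly_Mapping.lookup f \<alpha>) = 0}"

definition is_ideal :: "'a::comm_ring_1 set \<Rightarrow> bool" where
  "is_ideal J \<longleftrightarrow> 0 \<in> J \<and> (\<forall>a\<in>J. \<forall>b\<in>J. a + b \<in> J) \<and> (\<forall>r. \<forall>a\<in>J. r * a \<in> J)"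

definition ideal_gen :: "'a::comm_ring_1 set \<Rightarrow> 'a set" where
  "ideal_gen S = \<Inter>{J. is_ideal J \<and> S \<subseteq> J}"

definition ideal_sum :: "'a::comm_ring_1 set \<Rightarrow> 'a set \<Rightarrow> 'a set" where
  "ideal_sum I J = {a + b | a b. a \<in> I \<and> b \<in> J}"

definition rad :: "'a::comm_ring_1 set \<Rightarrow> 'a set" where
  "rad J = {f. \<exists>k::nat. f ^ k \<in> J}"

definition mono :: "('n \<Rightarrow>\<^sub>0 nat) \<Rightarrow> ('n, 'k::field) mpoly" where
  "mono u = Poly_Mapping.single u 1"

definition is_binomial :: "('n, 'k::field) mpoly \<Rightarrow> bool" where
  "is_binomial f \<longleftrightarrow> (\<exists>u v. f = mono u - mono v)"

definition bar :: "('n, 'k::field) mpoly set \<Rightarrow> nat" where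
  "bar I = (LEAST t. \<exists>Bs. length Bs = t \<and> (\<forall>B\<in>set Bs. is_binomial B \<and> B \<in> I)
                         \<and> I = rad (ideal_gen (set Bs)))"

text \<open>Height of I_A, which by the standing facts equals dim_Q ker_Q(A).\<close>
definition kerQ :: "('n::finite \<Rightarrow> 'm \<Rightarrow> int) \<Rightarrow> ('n \<Rightarrow> rat) set" where
  "kerQ A = {v. \<forall>j. (\<Sum>i\<in>UNIV. v i * of_int (A i j)) = 0}"

definition toric_height :: "('n::finite \<Rightarrow> 'm \<Rightarrow> int) \<Rightarrow> nat" where
  "toric_height A = vector_space.dim (\<lambda>(c::rat) v i. c * v i) (kerQ A)"

text \<open>Radical splittable; the configurations A_1, A_2 live in Z^{m_i} for some m_i,
  encoded as integer vectors indexed by nat vanishing from index m_i on.\<close>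
definition radical_splittable :: "('n::finite, 'k::field) mpoly set \<Rightarrow> bool" where
  "radical_splittable I \<longleftrightarrow>
     (\<exists>(A1::'n \<Rightarrow> nat \<Rightarrow> int) (A2::'n \<Rightarrow> nat \<Rightarrow> int) m1 m2.
        (\<forall>i j. m1 \<le> j \<longrightarrow> A1 i j = 0) \<and> (\<forall>i j. m2 \<le> j \<longrightarrow> A2 i j = 0) \<and>
        pointed_config A1 \<and> pointed_config A2 \<and>
        I = rad (ideal_sum (toric_ideal A1) (toric_ideal A2)) \<and>
        toric_ideal A1 \<noteq> I \<and> toric_ideal A2 \<noteq> I)"

end

theory Submission
  imports Defs "HOL-Library.Countable"
begin

(* Write I_A = rad(B_1, ..., B_t) with binomials B_i and t = bar(I_A) \<le> 2r - 2, and split the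
   B_i into two groups of at most r - 1. The exponent differences u - v of the binomials
   x^u - x^v of one group span less than the r-dimensional space ker_Q(A), so some integer
   weight W is orthogonal to all of them but not to some z in ker_Z(A). Adding W to A as a
   new row gives a pointed configuration whose toric ideal contains the group, is contained
   in I_A and misses x^(z+) - x^(z-). The sum of the two toric ideals so obtained lies between
   (B_1, ..., B_t) and I_A, and I_A is radical, so its radical is I_A. *)

section \<open>Ideals\<close>

lemma ideal_0: "is_ideal J \<Longrightarrow> 0 \<in> J"
  unfolding is_ideal_def by blast

lemma ideal_add: "is_ideal J \<Longrightarrow> a \<in> J \<Longrightarrow> b \<in> J \<Longrightarrow> a + b \<in> J"
  unfolding is_ideal_def by blast

lemma ideal_mult: "is_ideal J \<Longrightarrow> a \<in> J \<Longrightarrow> r * a \<in> J"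
  unfolding is_ideal_def by blast

lemma ideal_diff: "is_ideal J \<Longrightarrow> a \<in> J \<Longrightarrow> b \<in> J \<Longrightarrow> a - b \<in> J"
  using ideal_add[of J a "(- 1) * b"] ideal_mult[of J b "- 1"] by simp

lemma is_ideal_ideal_gen: "is_ideal (ideal_gen S)"
  unfolding is_ideal_def ideal_gen_def by auto

lemma ideal_gen_superset: "S \<subseteq> ideal_gen S"
  unfolding ideal_gen_def by auto

lemma ideal_gen_minimal: "is_ideal J \<Longrightarrow> S \<subseteq> J \<Longrightarrow> ideal_gen S \<subseteq> J"
  unfolding ideal_gen_def by auto

lemma is_ideal_ideal_sum:
  assumes I: "is_ideal I" and J: "is_ideal J"
  shows "is_ideal (ideal_sum I J)"
  unfolding is_ideal_def ideal_sum_def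
proof (intro conjI ballI allI)
  show "0 \<in> {a + b |a b. a \<in> I \<and> b \<in> J}"
    using ideal_0[OF I] ideal_0[OF J] by force
next
  fix x y assume "x \<in> {a + b |a b. a \<in> I \<and> b \<in> J}" "y \<in> {a + b |a b. a \<in> I \<and> b \<in> J}"
  then obtain a b c d where "x = a + b" "y = c + d" "a \<in> I" "b \<in> J" "c \<in> I" "d \<in> J"
    by blast
  then show "x + y \<in> {a + b |a b. a \<in> I \<and> b \<in> J}"
    using ideal_add[OF I] ideal_add[OF J]
    by (intro CollectI exI[of _ "a + c"] exI[of _ "b + d"]) (simp add: algebra_simps)
next
  fix r x assume "x \<in> {a + b |a b. a \<in> I \<and> b \<in> J}"
  then obtain a b where "x = a + b" "a \<in> I" "b \<in> J" by blast
  then show "r * x \<in> {a + b |a b. a \<in> I \<and> b \<in> J}"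
    using ideal_mult[OF I] ideal_mult[OF J]
    by (intro CollectI exI[of _ "r * a"] exI[of _ "r * b"]) (simp add: algebra_simps)
qed

lemma ideal_sum_upper: "is_ideal I \<Longrightarrow> is_ideal J \<Longrightarrow> I \<union> J \<subseteq> ideal_sum I J"
  unfolding ideal_sum_def by (force dest: ideal_0)

lemma ideal_sum_least: "is_ideal K \<Longrightarrow> I \<subseteq> K \<Longrightarrow> J \<subseteq> K \<Longrightarrow> ideal_sum I J \<subseteq> K"
  unfolding ideal_sum_def by (auto intro: ideal_add)

lemma rad_mono: "I \<subseteq> J \<Longrightarrow> rad I \<subseteq> rad J"
  unfolding rad_def by blast

lemma rad_eqI: "(\<And>f k. f ^ k \<in> J \<Longrightarrow> f \<in> J) \<Longrightarrow> rad J = J"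
  unfolding rad_def by (auto intro: exI[of _ 1])

lemma rad_ideal_sum_eq:
  assumes "is_ideal I1" "is_ideal I2" "I1 \<subseteq> I" "I2 \<subseteq> I" "is_ideal I" "rad I = I"
    and "I = rad (ideal_gen S)" "S \<subseteq> I1 \<union> I2"
  shows "I = rad (ideal_sum I1 I2)"
proof
  have "S \<subseteq> ideal_sum I1 I2"
    using assms(8) ideal_sum_upper[OF assms(1,2)] by blast
  then have "ideal_gen S \<subseteq> ideal_sum I1 I2"
    by (rule ideal_gen_minimal[OF is_ideal_ideal_sum[OF assms(1,2)]])
  then show "I \<subseteq> rad (ideal_sum I1 I2)"
    by (subst assms(7)) (rule rad_mono)
  show "rad (ideal_sum I1 I2) \<subseteq> I"
    using rad_mono[OF ideal_sum_least[OF assms(5,3,4)]] assms(6) by simp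
qed

section \<open>Pushing exponents forward\<close>

definition push_exponents :: "('a \<Rightarrow> 'c) \<Rightarrow> ('a \<Rightarrow>\<^sub>0 'k::comm_monoid_add) \<Rightarrow> ('c \<Rightarrow>\<^sub>0 'k)" where
  "push_exponents h f =
    (\<Sum>\<alpha>\<in>Poly_Mapping.keys f. Poly_Mapping.single (h \<alpha>) (Poly_Mapping.lookup f \<alpha>))"

lemma push_exponents_superset:
  assumes "finite S" "Poly_Mapping.keys f \<subseteq> S"
  shows "push_exponents h f = (\<Sum>\<alpha>\<in>S. Poly_Mapping.single (h \<alpha>) (Poly_Mapping.lookup f \<alpha>))"
  unfolding push_exponents_def
  by (rule sum.mono_neutral_left) (use assms in \<open>auto simp: in_keys_iff\<close>)

lemma push_exponents_add: "push_exponents h (f + g) = push_exponents h f + push_exponents h g"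
proof -
  let ?S = "Poly_Mapping.keys f \<union> Poly_Mapping.keys g"
  have "push_exponents h (f + g) =
      (\<Sum>\<alpha>\<in>?S. Poly_Mapping.single (h \<alpha>) (Poly_Mapping.lookup (f + g) \<alpha>))"
    by (rule push_exponents_superset) (auto dest: keys_add[THEN subsetD])
  also have "\<dots> = (\<Sum>\<alpha>\<in>?S. Poly_Mapping.single (h \<alpha>) (Poly_Mapping.lookup f \<alpha>))
                 + (\<Sum>\<alpha>\<in>?S. Poly_Mapping.single (h \<alpha>) (Poly_Mapping.lookup g \<alpha>))"
    by (simp add: lookup_add single_add sum.distrib)
  also have "\<dots> = push_exponents h f + push_exponents h g"
    by (subst (1 2) push_exponents_superset[of ?S]) auto
  finally show ?thesis .
qed

lemma push_exponents_0 [simp]: "push_exponents h 0 = 0"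
  by (simp add: push_exponents_def)

lemma push_exponents_sum: "push_exponents h (\<Sum>i\<in>I. F i) = (\<Sum>i\<in>I. push_exponents h (F i))"
  by (induction I rule: infinite_finite_induct) (auto simp: push_exponents_add)

lemma push_exponents_single [simp]:
  "push_exponents h (Poly_Mapping.single \<alpha> c) = Poly_Mapping.single (h \<alpha>) c"
  by (simp add: push_exponents_def)

lemma push_exponents_diff:
  fixes f g :: "'a \<Rightarrow>\<^sub>0 'k::ab_group_add"
  shows "push_exponents h (f - g) = push_exponents h f - push_exponents h g"
  using push_exponents_add[of h "f - g" g] by (simp add: algebra_simps)

lemma poly_mapping_sum_single_keys:
  "f = (\<Sum>\<alpha>\<in>Poly_Mapping.keys f. Poly_Mapping.single \<alpha> (Poly_Mapping.lookup f \<alpha>))"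
  by (rule poly_mapping_eqI) (auto simp: lookup_sum lookup_single when_def in_keys_iff)

lemma push_exponents_mult:
  fixes f g :: "'a::monoid_add \<Rightarrow>\<^sub>0 'k::semiring_0"
  assumes h_add: "\<And>a b. h (a + b) = h a + h b"
  shows "push_exponents h (f * g) = push_exponents h f * push_exponents h g"
proof -
  let ?F = "Poly_Mapping.keys f" and ?G = "Poly_Mapping.keys g"
  have "f * g = (\<Sum>\<alpha>\<in>?F. Poly_Mapping.single \<alpha> (Poly_Mapping.lookup f \<alpha>))
              * (\<Sum>\<beta>\<in>?G. Poly_Mapping.single \<beta> (Poly_Mapping.lookup g \<beta>))"
    by (subst (1) poly_mapping_sum_single_keys[of f], subst (1) poly_mapping_sum_single_keys[of g])
      (rule refl)
  also have "\<dots> = (\<Sum>\<alpha>\<in>?F. \<Sum>\<beta>\<in>?G.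
      Poly_Mapping.single (\<alpha> + \<beta>) (Poly_Mapping.lookup f \<alpha> * Poly_Mapping.lookup g \<beta>))"
    by (simp add: sum_product mult_single)
  finally have "push_exponents h (f * g) =
      (\<Sum>\<alpha>\<in>?F. \<Sum>\<beta>\<in>?G.
        Poly_Mapping.single (h \<alpha> + h \<beta>) (Poly_Mapping.lookup f \<alpha> * Poly_Mapping.lookup g \<beta>))"
    by (simp add: push_exponents_sum h_add)
  also have "\<dots> = push_exponents h f * push_exponents h g"
    by (simp add: push_exponents_def sum_product mult_single)
  finally show ?thesis .
qed

lemma push_exponents_1:
  "h 0 = 0 \<Longrightarrow> push_exponents h (1 :: 'a::zero \<Rightarrow>\<^sub>0 'k::{zero_neq_one,comm_monoid_add}) = 1"
  by (metis push_exponents_single single_one)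

lemma push_exponents_power:
  fixes f :: "'a::monoid_add \<Rightarrow>\<^sub>0 'k::semiring_1"
  assumes "\<And>a b. h (a + b) = h a + h b" "h 0 = 0"
  shows "push_exponents h (f ^ k) = push_exponents h f ^ k"
  by (induction k)
    (simp_all add: push_exponents_1[of h, OF assms(2)] push_exponents_mult[of h, OF assms(1)])

lemma lookup_push_exponents:
  "Poly_Mapping.lookup (push_exponents h f) c =
    (\<Sum>\<alpha>\<in>{\<alpha>\<in>Poly_Mapping.keys f. h \<alpha> = c}. Poly_Mapping.lookup f \<alpha>)"
  unfolding push_exponents_def lookup_sum lookup_single when_def
  by (simp add: sum.inter_filter)

lemma push_exponents_eq_0_iff:
  "push_exponents h f = 0 \<longleftrightarrow>
    (\<forall>c. (\<Sum>\<alpha>\<in>{\<alpha>\<in>Poly_Mapping.keys f. h \<alpha> = c}. Poly_Mapping.lookup f \<alpha>) = 0)"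
  by (metis lookup_push_exponents lookup_zero poly_mapping_eqI)

lemma push_exponents_eq_0_iff_fibres:
  "push_exponents h f = 0 \<longleftrightarrow>
    (\<forall>\<gamma>\<in>Poly_Mapping.keys f.
      (\<Sum>\<alpha>\<in>{\<alpha>\<in>Poly_Mapping.keys f. h \<alpha> = h \<gamma>}. Poly_Mapping.lookup f \<alpha>) = 0)"
  unfolding push_exponents_eq_0_iff
proof safe
  fix c
  assume fibres: "\<forall>\<gamma>\<in>Poly_Mapping.keys f.
    (\<Sum>\<alpha>\<in>{\<alpha>\<in>Poly_Mapping.keys f. h \<alpha> = h \<gamma>}. Poly_Mapping.lookup f \<alpha>) = 0"
  show "(\<Sum>\<alpha>\<in>{\<alpha>\<in>Poly_Mapping.keys f. h \<alpha> = c}. Poly_Mapping.lookup f \<alpha>) = 0"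
  proof (cases "\<exists>\<gamma>\<in>Poly_Mapping.keys f. h \<gamma> = c")
    case True
    then show ?thesis using fibres by blast
  next
    case False
    then have "{\<alpha>\<in>Poly_Mapping.keys f. h \<alpha> = c} = {}" by auto
    then show ?thesis by (simp only: sum.empty)
  qed
qed blast

lemma push_exponents_eq_0_iff_same_fibres:
  assumes "\<And>a b. h1 a = h1 b \<longleftrightarrow> h2 a = h2 b"
  shows "push_exponents h1 f = 0 \<longleftrightarrow> push_exponents h2 f = 0"
  unfolding push_exponents_eq_0_iff_fibres using assms by presburger

section \<open>Toric ideals\<close>

lemma toric_ideal_eq_kernel: "toric_ideal A = {f. push_exponents (lin_img A) f = 0}"
  unfolding toric_ideal_def push_exponents_eq_0_iff by simp

lemma lin_img_add: "lin_img A (a + b) = lin_img A a + lin_img A b"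
  by (auto simp: lin_img_def lookup_add algebra_simps sum.distrib fun_eq_iff)

lemma lin_img_0 [simp]: "lin_img A 0 = 0"
  by (auto simp: lin_img_def fun_eq_iff)

lemma is_ideal_toric_ideal: "is_ideal (toric_ideal A :: ('n::finite, 'k::field) mpoly set)"
  unfolding is_ideal_def toric_ideal_eq_kernel
  by (simp add: push_exponents_add push_exponents_mult lin_img_add)

definition binom :: "('n \<Rightarrow>\<^sub>0 nat) \<times> ('n \<Rightarrow>\<^sub>0 nat) \<Rightarrow> ('n, 'k::field) mpoly" where
  "binom p = mono (fst p) - mono (snd p)"

lemma is_binomial_iff_in_range_binom: "is_binomial f \<longleftrightarrow> f \<in> range binom"
  unfolding is_binomial_def binom_def by (auto intro: range_eqI[of _ _ "(_, _)"])

lemma binom_in_toric_ideal_iff: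
  "(binom (u, v) :: ('n::finite, 'k::field) mpoly) \<in> toric_ideal A \<longleftrightarrow> lin_img A u = lin_img A v"
proof -
  have "(binom (u, v) :: ('n, 'k) mpoly) \<in> toric_ideal A \<longleftrightarrow>
      Poly_Mapping.single (lin_img A u) (1::'k) = Poly_Mapping.single (lin_img A v) 1"
    by (simp add: toric_ideal_eq_kernel binom_def mono_def push_exponents_diff)
  also have "\<dots> \<longleftrightarrow> lin_img A u = lin_img A v"
    by (metis lookup_single_eq lookup_single_not_eq zero_neq_one)
  finally show ?thesis .
qed

(* Re-indexing by natural numbers embeds 'm => 'a into nat =>0 'a, an ordered monoid whose
   monoid algebra over a field is a domain. *)

definition nat_coords :: "('m::finite \<Rightarrow> 'a::zero) \<Rightarrow> (nat \<Rightarrow>\<^sub>0 'a)" where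
  "nat_coords x =
    Abs_poly_mapping (\<lambda>k. if k \<in> range (to_nat :: 'm \<Rightarrow> nat) then x (from_nat k) else 0)"

lemma lookup_nat_coords:
  fixes x :: "'m::finite \<Rightarrow> 'a::zero"
  shows "Poly_Mapping.lookup (nat_coords x) k =
    (if k \<in> range (to_nat :: 'm \<Rightarrow> nat) then x (from_nat k) else 0)"
proof -
  have "finite {k. (if k \<in> range (to_nat :: 'm \<Rightarrow> nat) then x (from_nat k) else 0) \<noteq> 0}"
    by (rule finite_subset[of _ "range (to_nat :: 'm \<Rightarrow> nat)"]) auto
  then show ?thesis
    unfolding nat_coords_def by simp
qed

lemma nat_coords_add:
  fixes x y :: "'m::finite \<Rightarrow> 'a::monoid_add"
  shows "nat_coords (x + y) = nat_coords x + nat_coords y"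
  by (rule poly_mapping_eqI) (simp add: lookup_add lookup_nat_coords)

lemma nat_coords_0 [simp]: "nat_coords 0 = 0"
  by (rule poly_mapping_eqI) (simp add: lookup_nat_coords)

lemma nat_coords_eq_iff:
  fixes x y :: "'m::finite \<Rightarrow> 'a::zero"
  shows "nat_coords x = nat_coords y \<longleftrightarrow> x = y"
proof
  assume "nat_coords x = nat_coords y"
  then have "Poly_Mapping.lookup (nat_coords x) (to_nat j) =
      Poly_Mapping.lookup (nat_coords y) (to_nat j)" for j :: 'm
    by simp
  then show "x = y" by (auto simp: lookup_nat_coords)
qed simp

lemma nat_coords_bounded:
  "\<exists>m. \<forall>k\<ge>m. \<forall>x :: 'm::finite \<Rightarrow> 'a::zero. Poly_Mapping.lookup (nat_coords x) k = 0"
proof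
  have "to_nat j < Suc (Max (range (to_nat :: 'm \<Rightarrow> nat)))" for j :: 'm
    by (simp add: le_imp_less_Suc)
  then show "\<forall>k\<ge>Suc (Max (range (to_nat :: 'm \<Rightarrow> nat))).
      \<forall>x :: 'm \<Rightarrow> 'a. Poly_Mapping.lookup (nat_coords x) k = 0"
    by (auto simp: lookup_nat_coords) (meson leD)
qed

lemma rad_toric_ideal:
  fixes A :: "'n::finite \<Rightarrow> 'm::finite \<Rightarrow> int"
  shows "rad (toric_ideal A :: ('n, 'k::field) mpoly set) = toric_ideal A"
proof (rule rad_eqI)
  fix f :: "('n, 'k) mpoly" and k
  assume "f ^ k \<in> toric_ideal A"
  define h where "h \<alpha> = nat_coords (lin_img A \<alpha>)" for \<alpha>
  have same_fibres: "h a = h b \<longleftrightarrow> lin_img A a = lin_img A b" for a b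
    by (simp add: h_def nat_coords_eq_iff)
  have h_add: "h (a + b) = h a + h b" for a b
    by (simp add: h_def lin_img_add nat_coords_add)
  have h_kernel: "push_exponents h g = 0 \<longleftrightarrow> g \<in> toric_ideal A" for g :: "('n, 'k) mpoly"
    using push_exponents_eq_0_iff_same_fibres[of h "lin_img A", OF same_fibres]
    by (simp add: toric_ideal_eq_kernel)
  have "h 0 = 0" by (simp add: h_def)
  have "push_exponents h (f ^ k) = 0"
    using \<open>f ^ k \<in> toric_ideal A\<close> h_kernel by blast
  then have "push_exponents h f ^ k = 0"
    by (simp only: push_exponents_power[of h, OF h_add \<open>h 0 = 0\<close>])
  then have "push_exponents h f = 0" by simp
  then show "f \<in> toric_ideal A"
    using h_kernel by blast
qed

section \<open>Binomial generators\<close>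

lemma dickson_finite_basis:
  fixes e :: "'b \<Rightarrow> 'a \<Rightarrow> nat"
  assumes "finite I"
  shows "\<exists>F\<subseteq>S. finite F \<and> (\<forall>s\<in>S. \<exists>f\<in>F. \<forall>j\<in>I. e f j \<le> e s j)"
  using assms
proof (induction I arbitrary: S rule: finite_induct)
  case empty
  show ?case
  proof (cases "S = {}")
    case False
    then obtain s where "s \<in> S" by blast
    then show ?thesis by (intro exI[of _ "{s}"]) auto
  qed auto
next
  case (insert i I)
  obtain F0 where F0: "F0 \<subseteq> S" "finite F0" "\<forall>s\<in>S. \<exists>f\<in>F0. \<forall>j\<in>I. e f j \<le> e s j"
    using insert.IH[of S] by blast
  (* Elements of S not dominated at i by their witness from F0 fall into finitely many slices
     e s i = c, each handled by the induction hypothesis. *)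
  have "\<forall>c. \<exists>G\<subseteq>{s\<in>S. e s i = c}. finite G
      \<and> (\<forall>s\<in>{s\<in>S. e s i = c}. \<exists>f\<in>G. \<forall>j\<in>I. e f j \<le> e s j)"
    by (intro allI insert.IH)
  from choice[OF this] obtain G where G: "\<And>c. G c \<subseteq> {s\<in>S. e s i = c} \<and> finite (G c)
      \<and> (\<forall>s\<in>{s\<in>S. e s i = c}. \<exists>f\<in>G c. \<forall>j\<in>I. e f j \<le> e s j)"
    by blast
  define M where "M = Max ((\<lambda>f. e f i) ` F0)"
  define F where "F = F0 \<union> (\<Union>c<M. G c)"
  have "F \<subseteq> S" unfolding F_def using F0(1) G by blast
  moreover have "finite F" unfolding F_def using F0(2) G by simp
  moreover have "\<exists>f\<in>F. \<forall>j\<in>insert i I. e f j \<le> e s j" if s: "s \<in> S" for s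
  proof -
    obtain f0 where f0: "f0 \<in> F0" "\<forall>j\<in>I. e f0 j \<le> e s j" using F0(3) s by blast
    show ?thesis
    proof (cases "e f0 i \<le> e s i")
      case True
      then show ?thesis using f0 by (auto simp: F_def)
    next
      case False
      moreover have "e f0 i \<le> M" unfolding M_def using f0(1) F0(2) by (intro Max_ge) auto
      ultimately have "e s i < M" by simp
      moreover obtain f where "f \<in> G (e s i)" "\<forall>j\<in>I. e f j \<le> e s j" using G[of "e s i"] s by blast
      moreover have "e f i = e s i" using G[of "e s i"] \<open>f \<in> G (e s i)\<close> by blast
      ultimately show ?thesis by (intro bexI[of _ f]) (auto simp: F_def)
    qed
  qed
  ultimately show ?case by blast
qed

definition pair_le :: "('n \<Rightarrow>\<^sub>0 nat) \<times> ('n \<Rightarrow>\<^sub>0 nat) \<Rightarrow> ('n \<Rightarrow>\<^sub>0 nat) \<times> ('n \<Rightarrow>\<^sub>0 nat) \<Rightarrow> bool" where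
  "pair_le p q \<longleftrightarrow> (\<forall>i. Poly_Mapping.lookup (fst p) i \<le> Poly_Mapping.lookup (fst q) i
                      \<and> Poly_Mapping.lookup (snd p) i \<le> Poly_Mapping.lookup (snd q) i)"

definition toric_pairs :: "('n::finite \<Rightarrow> 'm \<Rightarrow> int) \<Rightarrow> (('n \<Rightarrow>\<^sub>0 nat) \<times> ('n \<Rightarrow>\<^sub>0 nat)) set" where
  "toric_pairs A = {(u, v). lin_img A u = lin_img A v \<and> (u, v) \<noteq> (0, 0)}"

definition total_degree :: "('n::finite \<Rightarrow>\<^sub>0 nat) \<Rightarrow> nat" where
  "total_degree u = (\<Sum>i\<in>UNIV. Poly_Mapping.lookup u i)"

lemma total_degree_add: "total_degree (u + v) = total_degree u + total_degree v"
  by (simp add: total_degree_def lookup_add sum.distrib)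

lemma total_degree_eq_0_iff: "total_degree u = 0 \<longleftrightarrow> u = 0"
  by (auto simp: total_degree_def intro!: poly_mapping_eqI)

lemma binom_in_ideal_gen_minimal_pairs:
  fixes A :: "'n::finite \<Rightarrow> 'm \<Rightarrow> int"
  assumes F: "F \<subseteq> toric_pairs A"
    and dominated: "\<forall>q\<in>toric_pairs A. \<exists>p\<in>F. pair_le p q"
    and "lin_img A u = lin_img A v"
  shows "(binom (u, v) :: ('n, 'k::field) mpoly) \<in> ideal_gen (binom ` F)"
  using \<open>lin_img A u = lin_img A v\<close>
proof (induction "total_degree u + total_degree v" arbitrary: u v rule: less_induct)
  case less
  let ?J = "ideal_gen (binom ` F) :: ('n, 'k) mpoly set"
  show ?case
  proof (cases "(u, v) = (0, 0)")
    case True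
    then show ?thesis using ideal_0[OF is_ideal_ideal_gen] by (simp add: binom_def)
  next
    case False
    with less.prems dominated obtain u' v' where uv': "(u', v') \<in> F" "pair_le (u', v') (u, v)"
      unfolding toric_pairs_def by fastforce
    have "lin_img A u' = lin_img A v'" "(u', v') \<noteq> (0, 0)"
      using uv'(1) F by (auto simp: toric_pairs_def)
    have u: "u = u' + (u - u')" and v: "v = v' + (v - v')"
      using uv'(2) by (auto intro!: poly_mapping_eqI simp: pair_le_def lookup_add lookup_minus)
    have "lin_img A (u - u') = lin_img A (v - v')"
      using less.prems \<open>lin_img A u' = lin_img A v'\<close> lin_img_add[of A u' "u - u'"]
        lin_img_add[of A v' "v - v'"] by (simp flip: u v)
    moreover have "total_degree (u - u') + total_degree (v - v') < total_degree u + total_degree v"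
      using \<open>(u', v') \<noteq> (0, 0)\<close> total_degree_add[of u' "u - u'"] total_degree_add[of v' "v - v'"]
      by (simp flip: u v) (metis gr0I total_degree_eq_0_iff)
    ultimately have "binom (u - u', v - v') \<in> ?J"
      using less.hyps by blast
    moreover have "binom (u', v') \<in> ?J"
      using uv'(1) ideal_gen_superset by blast
    moreover have "(binom (u, v) :: ('n, 'k) mpoly)
        = mono (u - u') * binom (u', v') + mono v' * binom (u - u', v - v')"
      by (subst (1 2) u, subst (1 2) v) (simp add: binom_def mono_def mult_single algebra_simps)
    ultimately show ?thesis
      by (simp add: ideal_add ideal_mult is_ideal_ideal_gen)
  qed
qed

lemma toric_ideal_fibre_partner:
  assumes "f \<in> toric_ideal A" "\<alpha> \<in> Poly_Mapping.keys f"
  obtains \<beta> where "\<beta> \<in> Poly_Mapping.keys f" "\<beta> \<noteq> \<alpha>" "lin_img A \<beta> = lin_img A \<alpha>"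
proof -
  let ?S = "{\<beta>\<in>Poly_Mapping.keys f. lin_img A \<beta> = lin_img A \<alpha>}"
  have "(\<Sum>\<beta>\<in>?S. Poly_Mapping.lookup f \<beta>) = 0"
    using assms(1) unfolding toric_ideal_def by blast
  moreover have "Poly_Mapping.lookup f \<alpha> \<noteq> 0" using assms(2) by (simp add: in_keys_iff)
  ultimately have "?S \<noteq> {\<alpha>}" by auto
  with assms(2) that show ?thesis by blast
qed

lemma toric_ideal_subset_ideal:
  fixes J :: "('n::finite, 'k::field) mpoly set"
  assumes J: "is_ideal J"
    and binom_in_J: "\<And>u v. lin_img A u = lin_img A v \<Longrightarrow> binom (u, v) \<in> J"
  shows "toric_ideal A \<subseteq> J"
proof
  fix f :: "('n, 'k) mpoly"
  assume "f \<in> toric_ideal A"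
  then show "f \<in> J"
  proof (induction "card (Poly_Mapping.keys f)" arbitrary: f rule: less_induct)
    case less
    show ?case
    proof (cases "f = 0")
      case True
      then show ?thesis using ideal_0[OF J] by simp
    next
      case False
      then obtain \<alpha> where \<alpha>: "\<alpha> \<in> Poly_Mapping.keys f" by fastforce
      obtain \<beta> where \<beta>: "\<beta> \<in> Poly_Mapping.keys f" "\<beta> \<noteq> \<alpha>" "lin_img A \<beta> = lin_img A \<alpha>"
        using toric_ideal_fibre_partner[OF less.prems \<alpha>] .
      define c where "c = Poly_Mapping.lookup f \<alpha>"
      define g where "g = f - Poly_Mapping.single 0 c * binom (\<alpha>, \<beta>)"
      have "binom (\<alpha>, \<beta>) \<in> toric_ideal A"
        using \<beta>(3) by (simp add: binom_in_toric_ideal_iff)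
      then have "g \<in> toric_ideal A"
        unfolding g_def
        by (intro ideal_diff[OF is_ideal_toric_ideal] ideal_mult[OF is_ideal_toric_ideal] less.prems)
      have "Poly_Mapping.lookup g \<gamma> = Poly_Mapping.lookup f \<gamma> - (c when \<gamma> = \<alpha>) + (c when \<gamma> = \<beta>)"
        for \<gamma>
        unfolding g_def binom_def mono_def
        by (simp add: algebra_simps mult_single lookup_minus lookup_add lookup_single)
          (simp add: when_def)
      then have "Poly_Mapping.keys g \<subseteq> Poly_Mapping.keys f - {\<alpha>}"
        using \<beta> by (auto simp: when_def c_def in_keys_iff split: if_splits)
      then have "card (Poly_Mapping.keys g) < card (Poly_Mapping.keys f)"
        using \<alpha> by (intro psubset_card_mono) auto
      then have "g \<in> J" using less.hyps \<open>g \<in> toric_ideal A\<close> by blast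
      moreover have "Poly_Mapping.single 0 c * binom (\<alpha>, \<beta>) \<in> J"
        using ideal_mult[OF J binom_in_J[OF \<beta>(3)[symmetric]]] .
      ultimately have "g + Poly_Mapping.single 0 c * binom (\<alpha>, \<beta>) \<in> J"
        by (rule ideal_add[OF J])
      then show ?thesis by (simp add: g_def)
    qed
  qed
qed

lemma toric_ideal_binomial_generators:
  fixes A :: "'n::finite \<Rightarrow> 'm::finite \<Rightarrow> int"
  obtains Bs where "set Bs \<subseteq> range binom \<inter> toric_ideal A"
    and "(toric_ideal A :: ('n, 'k::field) mpoly set) = ideal_gen (set Bs)"
proof -
  define e :: "('n \<Rightarrow>\<^sub>0 nat) \<times> ('n \<Rightarrow>\<^sub>0 nat) \<Rightarrow> 'n + 'n \<Rightarrow> nat" where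
    "e p = case_sum (Poly_Mapping.lookup (fst p)) (Poly_Mapping.lookup (snd p))" for p
  obtain F where F: "F \<subseteq> toric_pairs A" "finite F"
    "\<forall>s\<in>toric_pairs A. \<exists>f\<in>F. \<forall>j\<in>UNIV. e f j \<le> e s j"
    using dickson_finite_basis[where S = "toric_pairs A" and e = e, OF finite_UNIV] by blast
  have "pair_le p q" if "\<forall>j\<in>UNIV. e p j \<le> e q j" for p q
    unfolding pair_le_def
  proof
    fix i
    show "Poly_Mapping.lookup (fst p) i \<le> Poly_Mapping.lookup (fst q) i
        \<and> Poly_Mapping.lookup (snd p) i \<le> Poly_Mapping.lookup (snd q) i"
      using bspec[OF that, of "Inl i"] bspec[OF that, of "Inr i"] by (simp add: e_def)
  qed
  then have dominated: "\<forall>q\<in>toric_pairs A. \<exists>p\<in>F. pair_le p q"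
    using F(3) by blast
  have "finite (binom ` F :: ('n, 'k) mpoly set)"
    using F(2) by simp
  then obtain Bs where Bs: "set Bs = (binom ` F :: ('n, 'k) mpoly set)"
    by (blast dest: finite_list)
  have "set Bs \<subseteq> toric_ideal A"
    using F(1) unfolding Bs toric_pairs_def by (auto simp: binom_in_toric_ideal_iff)
  then have "set Bs \<subseteq> range binom \<inter> toric_ideal A"
    unfolding Bs by blast
  moreover have "toric_ideal A \<subseteq> ideal_gen (set Bs)"
    unfolding Bs using binom_in_ideal_gen_minimal_pairs[OF F(1) dominated]
    by (rule toric_ideal_subset_ideal[OF is_ideal_ideal_gen])
  moreover have "ideal_gen (set Bs) \<subseteq> toric_ideal A"
    by (intro ideal_gen_minimal is_ideal_toric_ideal \<open>set Bs \<subseteq> toric_ideal A\<close>)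
  ultimately show ?thesis
    by (intro that) auto
qed

lemma bar_toric_ideal_witness:
  fixes A :: "'n::finite \<Rightarrow> 'm::finite \<Rightarrow> int"
  obtains Bs where "length Bs = bar (toric_ideal A :: ('n, 'k::field) mpoly set)"
    and "set Bs \<subseteq> range binom \<inter> toric_ideal A"
    and "(toric_ideal A :: ('n, 'k) mpoly set) = rad (ideal_gen (set Bs))"
proof -
  let ?P = "\<lambda>t. \<exists>Bs. length Bs = t \<and> (\<forall>B\<in>set Bs. is_binomial B \<and> B \<in> toric_ideal A)
                     \<and> (toric_ideal A :: ('n, 'k) mpoly set) = rad (ideal_gen (set Bs))"
  obtain Bs where Bs: "set Bs \<subseteq> range binom \<inter> toric_ideal A"
    and gen: "(toric_ideal A :: ('n, 'k) mpoly set) = ideal_gen (set Bs)"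
    using toric_ideal_binomial_generators by blast
  have "\<forall>B\<in>set Bs. is_binomial B \<and> B \<in> toric_ideal A"
    using Bs by (auto simp: is_binomial_iff_in_range_binom)
  moreover have "(toric_ideal A :: ('n, 'k) mpoly set) = rad (ideal_gen (set Bs))"
    by (simp add: gen[symmetric] rad_toric_ideal)
  ultimately have "?P (length Bs)" by blast
  then have "?P (bar (toric_ideal A :: ('n, 'k) mpoly set))"
    unfolding bar_def by (rule LeastI)
  then obtain Bs' where length: "length Bs' = bar (toric_ideal A :: ('n, 'k) mpoly set)"
    and binomials: "\<forall>B\<in>set Bs'. is_binomial B \<and> B \<in> toric_ideal A"
    and rad_eq: "(toric_ideal A :: ('n, 'k) mpoly set) = rad (ideal_gen (set Bs'))"
    by blast
  from binomials have "set Bs' \<subseteq> range binom \<inter> toric_ideal A"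
    by (auto simp: is_binomial_iff_in_range_binom)
  from length this rad_eq show ?thesis by (rule that)
qed

section \<open>Toric subideals cut out by a weight\<close>

lemma toric_ideal_mono:
  fixes A :: "'n::finite \<Rightarrow> 'm \<Rightarrow> int" and A' :: "'n \<Rightarrow> 'm' \<Rightarrow> int"
  assumes "\<And>u v. lin_img A' u = lin_img A' v \<Longrightarrow> lin_img A u = lin_img A v"
  shows "(toric_ideal A' :: ('n, 'k::field) mpoly set) \<subseteq> toric_ideal A"
  by (rule toric_ideal_subset_ideal[OF is_ideal_toric_ideal], unfold binom_in_toric_ideal_iff)
    (erule assms)

lemma pointed_config_iff: "pointed_config A \<longleftrightarrow> (\<forall>u. lin_img A u = 0 \<longrightarrow> u = 0)"
proof -
  have "pointed_config A \<longleftrightarrow> (\<forall>u. lin_img A (Abs_poly_mapping u) = 0 \<longrightarrow> Abs_poly_mapping u = 0)"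
    unfolding pointed_config_def lin_img_def
    by (simp add: fun_eq_iff poly_mapping_eq_iff)
  also have "\<dots> \<longleftrightarrow> (\<forall>u. lin_img A u = 0 \<longrightarrow> u = 0)"
    by (metis lookup_inverse)
  finally show ?thesis .
qed

lemma pointed_config_refine:
  assumes "pointed_config A" "\<And>u v. lin_img A' u = lin_img A' v \<Longrightarrow> lin_img A u = lin_img A v"
  shows "pointed_config A'"
  using assms lin_img_0 unfolding pointed_config_iff by metis

definition weight :: "('n::finite \<Rightarrow> int) \<Rightarrow> ('n \<Rightarrow>\<^sub>0 nat) \<Rightarrow> int" where
  "weight W u = (\<Sum>i\<in>UNIV. int (Poly_Mapping.lookup u i) * W i)"

lemma config_with_weight_row:
  fixes A :: "'n::finite \<Rightarrow> 'm::finite \<Rightarrow> int" and W :: "'n \<Rightarrow> int"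
  obtains m and A' :: "'n \<Rightarrow> nat \<Rightarrow> int" where "\<forall>i j. m \<le> j \<longrightarrow> A' i j = 0"
    and "\<forall>u v. lin_img A' u = lin_img A' v \<longleftrightarrow> lin_img A u = lin_img A v \<and> weight W u = weight W v"
proof -
  define B where "B i = case_option (W i) (A i)" for i
  define A' where "A' i = Poly_Mapping.lookup (nat_coords (B i))" for i
  have "lin_img B u = case_option (weight W u) (lin_img A u)" for u
    by (auto simp: fun_eq_iff B_def lin_img_def weight_def split: option.split)
  then have "lin_img B u = lin_img B v \<longleftrightarrow> lin_img A u = lin_img A v \<and> weight W u = weight W v"
    for u v
    by (auto simp: fun_eq_iff split: option.split)
  moreover have "lin_img A' u = Poly_Mapping.lookup (nat_coords (lin_img B u))" for u
    by (auto simp: fun_eq_iff A'_def lin_img_def lookup_nat_coords)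
  ultimately have fibres:
    "lin_img A' u = lin_img A' v \<longleftrightarrow> lin_img A u = lin_img A v \<and> weight W u = weight W v" for u v
    by (simp add: nat_coords_eq_iff flip: poly_mapping_eq_iff)
  obtain m where "\<forall>j\<ge>m. \<forall>x :: 'm option \<Rightarrow> int. Poly_Mapping.lookup (nat_coords x) j = 0"
    using nat_coords_bounded by blast
  then have "\<forall>i j. m \<le> j \<longrightarrow> A' i j = 0" by (simp add: A'_def)
  moreover have
    "\<forall>u v. lin_img A' u = lin_img A' v \<longleftrightarrow> lin_img A u = lin_img A v \<and> weight W u = weight W v"
    by (intro allI) (rule fibres)
  ultimately show ?thesis by (rule that)
qed

lemma sum_fun_apply: "(\<Sum>i\<in>S. f i) x = (\<Sum>i\<in>S. f i x)"
  by (induction S rule: infinite_finite_induct) auto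

lemma vector_space_fun: "vector_space (\<lambda>(c::'a::field) (v::'n \<Rightarrow> 'a) i. c * v i)"
  by unfold_locales (auto simp: fun_eq_iff algebra_simps)

lemma exists_separating_functional:
  fixes D K :: "('n::finite \<Rightarrow> 'a::field) set"
  assumes "finite D" and "card D < vector_space.dim (\<lambda>(c::'a) v i. c * v i) K"
  shows "\<exists>z\<in>K. \<exists>w. (\<forall>d\<in>D. (\<Sum>i\<in>UNIV. d i * w i) = 0) \<and> (\<Sum>i\<in>UNIV. z i * w i) \<noteq> 0"
proof -
  interpret V: vector_space "\<lambda>(c::'a) (v::'n \<Rightarrow> 'a) i. c * v i"
    by (rule vector_space_fun)
  interpret P: vector_space_pair "\<lambda>(c::'a) (v::'n \<Rightarrow> 'a) i. c * v i" "(*) :: 'a \<Rightarrow> 'a \<Rightarrow> 'a"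
    by (intro vector_space_pair.intro vector_space_fun, unfold_locales) (auto simp: algebra_simps)
  have "\<not> K \<subseteq> V.span D"
    using V.dim_le_card[OF _ assms(1), of K] assms(2) by linarith
  then obtain z where z: "z \<in> K" "z \<notin> V.span D" by blast
  obtain B where B: "B \<subseteq> D" "V.independent B" "D \<subseteq> V.span B"
    using V.maximal_independent_subset[of D] by blast
  have "z \<notin> V.span B" using z(2) V.span_mono[OF B(1)] by blast
  then have "V.independent (insert z B)" using B(2) by (rule V.independent_insertI)
  then obtain g where g: "Vector_Spaces.linear (\<lambda>(c::'a) (v::'n \<Rightarrow> 'a) i. c * v i) (*) g"
    "\<forall>x\<in>insert z B. g x = (if x = z then 1 else 0)"
    using P.linear_independent_extend[of _ "\<lambda>x. if x = z then 1 else 0"] by blast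
  have "g x = 0" if "x \<in> B" for x
    using g(2) \<open>z \<notin> V.span B\<close> V.span_base that by fastforce
  then have g_D: "g d = 0" if "d \<in> D" for d
    using P.linear_eq_0_on_span[OF g(1)] B(3) that by blast
  define w where "w i = g (\<lambda>j. if j = i then 1 else 0)" for i
  have "g x = (\<Sum>i\<in>UNIV. x i * w i)" for x
  proof -
    have "x = (\<Sum>i\<in>UNIV. (\<lambda>j. x i * (if j = i then 1 else 0)))"
      by (auto simp: fun_eq_iff sum_fun_apply if_distrib cong: if_cong)
    then have "g x = (\<Sum>i\<in>UNIV. g (\<lambda>j. x i * (if j = i then 1 else 0)))"
      using P.linear_sum[OF g(1)] by metis
    also have "\<dots> = (\<Sum>i\<in>UNIV. x i * w i)"
      using P.linear_scale[OF g(1)] by (simp add: w_def)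
    finally show ?thesis .
  qed
  then show ?thesis
    using z(1) g_D g(2) by (intro bexI[of _ z] exI[of _ w]) auto
qed

lemma rat_vector_integer_multiple:
  fixes w :: "'n::finite \<Rightarrow> rat"
  obtains W :: "'n \<Rightarrow> int" and c :: rat where "c \<noteq> 0" "\<And>i. of_int (W i) = c * w i"
proof -
  define d where "d = (\<Prod>i\<in>UNIV. snd (quotient_of (w i)))"
  have "\<exists>n. of_int n = of_int d * w i" for i
  proof -
    obtain a b where ab: "quotient_of (w i) = (a, b)" by fastforce
    then have "w i = of_int a / of_int b" "b > 0"
      by (simp_all add: quotient_of_div quotient_of_denom_pos)
    moreover have "d = b * (\<Prod>j\<in>UNIV - {i}. snd (quotient_of (w j)))"
      using prod.remove[of UNIV i "\<lambda>j. snd (quotient_of (w j))"] ab by (simp add: d_def)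
    ultimately show ?thesis
      by (intro exI[of _ "a * (\<Prod>j\<in>UNIV - {i}. snd (quotient_of (w j)))"]) simp
  qed
  then obtain W where "\<And>i. of_int (W i) = of_int d * w i" by metis
  moreover have "d \<noteq> 0"
    unfolding d_def by (metis prod_zero_iff finite_UNIV quotient_of_denom_pos' less_irrefl)
  ultimately show ?thesis
    by (intro that[of "of_int d" W]) simp_all
qed

lemma exists_integer_separating_weight:
  fixes A :: "'n::finite \<Rightarrow> 'm \<Rightarrow> int" and P :: "(('n \<Rightarrow>\<^sub>0 nat) \<times> ('n \<Rightarrow>\<^sub>0 nat)) set"
  assumes "finite P" "card P < toric_height A"
  obtains W Z :: "'n \<Rightarrow> int" where "\<forall>(a, b)\<in>P. weight W a = weight W b"
    and "\<forall>j. (\<Sum>i\<in>UNIV. Z i * A i j) = 0" and "(\<Sum>i\<in>UNIV. Z i * W i) \<noteq> 0"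
proof -
  define dv :: "('n \<Rightarrow>\<^sub>0 nat) \<times> ('n \<Rightarrow>\<^sub>0 nat) \<Rightarrow> 'n \<Rightarrow> rat" where
    "dv p i = of_nat (Poly_Mapping.lookup (fst p) i) - of_nat (Poly_Mapping.lookup (snd p) i)"
    for p i
  have "card (dv ` P) < vector_space.dim (\<lambda>(c::rat) v i. c * v i) (kerQ A)"
    using card_image_le[OF assms(1), of dv] assms(2) unfolding toric_height_def by linarith
  then obtain z w where z: "z \<in> kerQ A" and w: "\<forall>d\<in>dv ` P. (\<Sum>i\<in>UNIV. d i * w i) = 0"
    and zw: "(\<Sum>i\<in>UNIV. z i * w i) \<noteq> 0"
    using exists_separating_functional[of "dv ` P" "kerQ A"] assms(1) by blast
  obtain W cw where cw: "cw \<noteq> 0" and W: "\<And>i. of_int (W i) = cw * w i"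
    using rat_vector_integer_multiple by blast
  obtain Z cz where cz: "cz \<noteq> 0" and Z: "\<And>i. of_int (Z i) = cz * z i"
    using rat_vector_integer_multiple by blast
  have "weight W a = weight W b" if "(a, b) \<in> P" for a b
  proof -
    have "(of_int (weight W a - weight W b) :: rat) = cw * (\<Sum>i\<in>UNIV. dv (a, b) i * w i)"
      by (simp add: weight_def dv_def W sum_distrib_left sum_subtractf[symmetric] algebra_simps)
    then show ?thesis using w that by simp
  qed
  moreover have "(\<Sum>i\<in>UNIV. Z i * A i j) = 0" for j
  proof -
    have "(of_int (\<Sum>i\<in>UNIV. Z i * A i j) :: rat) = cz * (\<Sum>i\<in>UNIV. z i * of_int (A i j))"
      by (simp add: Z sum_distrib_left algebra_simps)
    also have "\<dots> = 0" using z unfolding kerQ_def by simp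
    finally show ?thesis by (simp only: of_int_eq_0_iff)
  qed
  moreover have "(of_int (\<Sum>i\<in>UNIV. Z i * W i) :: rat) = cz * cw * (\<Sum>i\<in>UNIV. z i * w i)"
    by (simp add: Z W sum_distrib_left algebra_simps)
  then have "(\<Sum>i\<in>UNIV. Z i * W i) \<noteq> 0" using cz cw zw by fastforce
  ultimately show ?thesis using that by blast
qed

lemma kernel_vector_exponents:
  fixes A :: "'n::finite \<Rightarrow> 'm \<Rightarrow> int"
  assumes "\<forall>j. (\<Sum>i\<in>UNIV. Z i * A i j) = 0"
  obtains u v where "lin_img A u = lin_img A v" and "weight W u - weight W v = (\<Sum>i\<in>UNIV. Z i * W i)"
proof -
  define u :: "'n \<Rightarrow>\<^sub>0 nat" where "u = Abs_poly_mapping (\<lambda>i. nat (Z i))"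
  define v :: "'n \<Rightarrow>\<^sub>0 nat" where "v = Abs_poly_mapping (\<lambda>i. nat (- Z i))"
  have Z_parts: "int (Poly_Mapping.lookup u i) - int (Poly_Mapping.lookup v i) = Z i" for i
    by (simp add: u_def v_def)
  have uv: "(\<Sum>i\<in>UNIV. int (Poly_Mapping.lookup u i) * X i)
            - (\<Sum>i\<in>UNIV. int (Poly_Mapping.lookup v i) * X i) = (\<Sum>i\<in>UNIV. Z i * X i)" for X
    unfolding sum_subtractf[symmetric] left_diff_distrib[symmetric] Z_parts ..
  have "lin_img A u = lin_img A v"
    using uv[of "\<lambda>i. A i _"] assms by (auto simp: fun_eq_iff lin_img_def)
  moreover have "weight W u - weight W v = (\<Sum>i\<in>UNIV. Z i * W i)"
    using uv unfolding weight_def .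
  ultimately show ?thesis using that by blast
qed

lemma proper_toric_subideal:
  fixes A :: "'n::finite \<Rightarrow> 'm::finite \<Rightarrow> int" and G :: "('n, 'k::field) mpoly list"
  assumes "pointed_config A" "length G < toric_height A" "set G \<subseteq> range binom \<inter> toric_ideal A"
  obtains m and A' :: "'n \<Rightarrow> nat \<Rightarrow> int" where "\<forall>i j. m \<le> j \<longrightarrow> A' i j = 0"
    and "pointed_config A'" and "set G \<subseteq> toric_ideal A'"
    and "toric_ideal A' \<subseteq> (toric_ideal A :: ('n, 'k) mpoly set)"
    and "toric_ideal A' \<noteq> (toric_ideal A :: ('n, 'k) mpoly set)"
proof -
  define P where "P = inv binom ` set G"
  have G: "set G = binom ` P"
    using assms(3) by (force simp: P_def f_inv_into_f)
  have "finite P" by (simp add: P_def)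
  moreover have "card P < toric_height A"
    using card_image_le[OF finite_set, of "inv binom" G] card_length[of G] assms(2)
    unfolding P_def by linarith
  ultimately obtain W Z where W: "\<forall>(a, b)\<in>P. weight W a = weight W b"
    and Z: "\<forall>j. (\<Sum>i\<in>UNIV. Z i * A i j) = 0" and ZW: "(\<Sum>i\<in>UNIV. Z i * W i) \<noteq> 0"
    by (rule exists_integer_separating_weight)
  obtain A' :: "'n \<Rightarrow> nat \<Rightarrow> int" and m :: nat where A'_supp: "\<forall>i j. m \<le> j \<longrightarrow> A' i j = 0"
    and A'_fibres:
      "\<forall>u v. lin_img A' u = lin_img A' v \<longleftrightarrow> lin_img A u = lin_img A v \<and> weight W u = weight W v"
    by (rule config_with_weight_row[of A W])
  have "pointed_config A'"
    by (rule pointed_config_refine[OF assms(1)]) (simp add: A'_fibres)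
  moreover have "(binom (a, b) :: ('n, 'k) mpoly) \<in> toric_ideal A'" if "(a, b) \<in> P" for a b
  proof -
    have "(binom (a, b) :: ('n, 'k) mpoly) \<in> toric_ideal A" using assms(3) that by (auto simp: G)
    moreover have "weight W a = weight W b" using W that by auto
    ultimately show ?thesis by (simp add: A'_fibres binom_in_toric_ideal_iff)
  qed
  then have "set G \<subseteq> toric_ideal A'" by (auto simp: G)
  moreover have "toric_ideal A' \<subseteq> (toric_ideal A :: ('n, 'k) mpoly set)"
    by (rule toric_ideal_mono) (simp add: A'_fibres)
  moreover obtain u v where "lin_img A u = lin_img A v" "weight W u \<noteq> weight W v"
    using kernel_vector_exponents[OF Z, of W] ZW by (metis eq_iff_diff_eq_0)
  then have "binom (u, v) \<in> toric_ideal A - (toric_ideal A' :: ('n, 'k) mpoly set)"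
    by (simp add: A'_fibres binom_in_toric_ideal_iff)
  then have "toric_ideal A' \<noteq> (toric_ideal A :: ('n, 'k) mpoly set)" by blast
  ultimately show ?thesis by (rule that[OF A'_supp])
qed

theorem theorem2p5:
  fixes A :: "'n::finite \<Rightarrow> 'm::finite \<Rightarrow> int"
    and r :: nat
  assumes "pointed_config A"
    and "toric_height A = r"
    and "r \<ge> 3"
    and "bar (toric_ideal A :: ('n, 'k::field) mpoly set) \<le> 2 * r - 2"
  shows "radical_splittable (toric_ideal A :: ('n, 'k) mpoly set)"
proof -
  let ?I = "toric_ideal A :: ('n, 'k) mpoly set"
  obtain Bs where Bs_length: "length Bs = bar ?I" and Bs: "set Bs \<subseteq> range binom \<inter> ?I"
    and I_eq: "?I = rad (ideal_gen (set Bs))"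
    by (rule bar_toric_ideal_witness)
  have "length Bs \<le> 2 * r - 2" using Bs_length assms(4) by simp
  then have short:
    "length (take (r - 1) Bs) < toric_height A" "length (drop (r - 1) Bs) < toric_height A"
    unfolding assms(2) length_drop using assms(3) by (simp, linarith)
  have binomial:
    "set (take (r - 1) Bs) \<subseteq> range binom \<inter> ?I" "set (drop (r - 1) Bs) \<subseteq> range binom \<inter> ?I"
    by (rule order_trans[OF set_take_subset Bs], rule order_trans[OF set_drop_subset Bs])
  obtain m1 and A1 :: "'n \<Rightarrow> nat \<Rightarrow> int" where A1: "\<forall>i j. m1 \<le> j \<longrightarrow> A1 i j = 0" "pointed_config A1"
    "set (take (r - 1) Bs) \<subseteq> toric_ideal A1" "toric_ideal A1 \<subseteq> ?I" "toric_ideal A1 \<noteq> ?I"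
    by (rule proper_toric_subideal[OF assms(1) short(1) binomial(1)])
  obtain m2 and A2 :: "'n \<Rightarrow> nat \<Rightarrow> int" where A2: "\<forall>i j. m2 \<le> j \<longrightarrow> A2 i j = 0" "pointed_config A2"
    "set (drop (r - 1) Bs) \<subseteq> toric_ideal A2" "toric_ideal A2 \<subseteq> ?I" "toric_ideal A2 \<noteq> ?I"
    by (rule proper_toric_subideal[OF assms(1) short(2) binomial(2)])
  have "set Bs = set (take (r - 1) Bs) \<union> set (drop (r - 1) Bs)"
    by (metis append_take_drop_id set_append)
  then have "set Bs \<subseteq> toric_ideal A1 \<union> toric_ideal A2"
    using A1(3) A2(3) by blast
  then have "?I = rad (ideal_sum (toric_ideal A1) (toric_ideal A2))"
    by (rule rad_ideal_sum_eq[OF is_ideal_toric_ideal is_ideal_toric_ideal A1(4) A2(4)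
          is_ideal_toric_ideal rad_toric_ideal I_eq])
  then show ?thesis
    unfolding radical_splittable_def
    by (intro exI[of _ A1] exI[of _ A2] exI[of _ m1] exI[of _ m2] conjI A1(1,2,5) A2(1,2,5))
qed

end
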